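(* Let $M$ be a graded $R$-module. If the map $\psi^q$ is surjective, then the quasi-compact open subsets of $qp.Spec_g(M)$ (with the quasi-Zariski topology) are closed under finite intersection and form an open base.
   Context: $R=\bigoplus_{g\in G}R_g$ is a graded commutative ring with identity graded by a group $G$, $h(R)=\bigcup_g R_g$; $M$ is a graded $R$-module, $h(M)$ its homogeneous elements. $Gr(I)$ is the graded radical of a graded ideal $I$. $(K:_RM)=\{r: rM\subseteq K\}$. Graded prime submodule: proper graded $P$ with $rm\in P$ ($r\in h(R), m\in h(M)$) implying $m\in P$ or $r\in(P:_RM)$. $Gr_M(K)$: intersection of graded prime submodules containing $K$ ($M$ if none). Graded primeful property of $K$: for each graded prime $p\supseteq(K:_RM)$ there is a graded prime submodule $P\supseteq K$ with $(P:_RM)=p$. Graded quasi-primary submodule: proper graded $Q$ with $rm\in Q$ ($r\in h(R),m\in h(M)$) implying $r\in Gr((Q:_RM))$ or $m\in Gr_M(Q)$. $qp.Spec_g(M)$: graded quasi-primary submodules with the graded primeful property. $qp\text{-}V_M^g(K)=\{Q\in qp.Spec_g(M): Gr((Q:_RM))\supseteq Gr((K:_RM))\}$; the quasi-Zariski topology has closed sets exactly these. $\overline R=R/\mathrm{Ann}(M)$. A graded quasi-primary ideal of $\overline R$ is a proper graded ideal $q$ with $ab\in q$ ($a,b$ homogeneous) implying $a\in Gr(q)$ or $b\in Gr(q)$; $qp.Spec_g(\overline R)$ is the set of them. $\psi^q:qp.Spec_g(M)\to qp.Spec_g(\overline R)$ is $\psi^q(Q)=(Q:_RM)/\mathrm{Ann}(M)$.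 *)

theory Defs
  imports Complex_Main
begin

text \<open>Setting: the commutative ring R is the whole type 'a (class comm_ring_1),
  the module M is the whole type 'b (class ab_group_add) with scalar multiplication
  scale, and the grading group G is the type 'g (class group_add, written additively).\<close>

definition gr_decomp :: "('g \<Rightarrow> 'x::ab_group_add set) \<Rightarrow> 'x \<Rightarrow> ('g \<Rightarrow> 'x) \<Rightarrow> bool" where
  "gr_decomp A x f \<longleftrightarrow> finite {g. f g \<noteq> 0} \<and> (\<forall>g. f g \<in> A g) \<and> x = (\<Sum>g\<in>{g. f g \<noteq> 0}. f g)"

definition direct_sum_grading :: "('g \<Rightarrow> 'x::ab_group_add set) \<Rightarrow> bool" where
  "direct_sum_grading A \<longleftrightarrow>
     (\<forall>g. 0 \<in> A g \<and> (\<forall>x\<in>A g. \<forall>y\<in>A g. x + y \<in> A g) \<and> (\<forall>x\<in>A g. - x \<in> A g))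
   \<and> (\<forall>x. \<exists>!f. gr_decomp A x f)"

definition comp :: "('g \<Rightarrow> 'x::ab_group_add set) \<Rightarrow> 'x \<Rightarrow> 'g \<Rightarrow> 'x" where
  "comp A x = (THE f. gr_decomp A x f)"

definition homog :: "('g \<Rightarrow> 'x set) \<Rightarrow> 'x set" where
  "homog A = (\<Union>g. A g)"

definition graded_ring :: "('g::group_add \<Rightarrow> 'a::comm_ring_1 set) \<Rightarrow> bool" where
  "graded_ring Rg \<longleftrightarrow> direct_sum_grading Rg \<and>
     (\<forall>g h. \<forall>a\<in>Rg g. \<forall>b\<in>Rg h. a * b \<in> Rg (g + h))"


definition graded_module ::
  "('a::comm_ring_1 \<Rightarrow> 'b::ab_group_add \<Rightarrow> 'b) \<Rightarrow> ('g::group_add \<Rightarrow> 'a set) \<Rightarrow> ('g \<Rightarrow> 'b set) \<Rightarrow> bool" where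
  "graded_module scale Rg Mg \<longleftrightarrow> module scale \<and> graded_ring Rg \<and> direct_sum_grading Mg \<and>
     (\<forall>g h. \<forall>a\<in>Rg g. \<forall>m\<in>Mg h. scale a m \<in> Mg (g + h))"

definition graded_set :: "('g \<Rightarrow> 'x::ab_group_add set) \<Rightarrow> 'x set \<Rightarrow> bool" where
  "graded_set A N \<longleftrightarrow> (\<forall>x\<in>N. \<forall>g. comp A x g \<in> N)"

definition gr_ideal :: "('g \<Rightarrow> 'a::comm_ring_1 set) \<Rightarrow> 'a set \<Rightarrow> bool" where
  "gr_ideal Rg I \<longleftrightarrow> 0 \<in> I \<and> (\<forall>x\<in>I. \<forall>y\<in>I. x + y \<in> I) \<and> (\<forall>r. \<forall>x\<in>I. r * x \<in> I)
     \<and> graded_set Rg I"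

definition gr_submodule :: "('a::comm_ring_1 \<Rightarrow> 'b::ab_group_add \<Rightarrow> 'b) \<Rightarrow> ('g \<Rightarrow> 'b set) \<Rightarrow> 'b set \<Rightarrow> bool" where
  "gr_submodule scale Mg N \<longleftrightarrow> 0 \<in> N \<and> (\<forall>x\<in>N. \<forall>y\<in>N. x + y \<in> N) \<and> (\<forall>r. \<forall>x\<in>N. scale r x \<in> N)
     \<and> graded_set Mg N"

definition colon :: "('a \<Rightarrow> 'b \<Rightarrow> 'b) \<Rightarrow> 'b set \<Rightarrow> 'a set" where
  "colon scale K = {r. \<forall>m. scale r m \<in> K}"

definition Ann :: "('a \<Rightarrow> 'b::zero \<Rightarrow> 'b) \<Rightarrow> 'a set" where
  "Ann scale = colon scale {0}"

definition Gr :: "('g \<Rightarrow> 'a::comm_ring_1 set) \<Rightarrow> 'a set \<Rightarrow> 'a set" where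
  "Gr Rg I = {r. \<forall>g. \<exists>n>0. (comp Rg r g) ^ n \<in> I}"

definition gr_prime_ideal :: "('g \<Rightarrow> 'a::comm_ring_1 set) \<Rightarrow> 'a set \<Rightarrow> bool" where
  "gr_prime_ideal Rg p \<longleftrightarrow> gr_ideal Rg p \<and> p \<noteq> UNIV \<and>
     (\<forall>a\<in>homog Rg. \<forall>b\<in>homog Rg. a * b \<in> p \<longrightarrow> a \<in> p \<or> b \<in> p)"

definition gr_prime_submodule ::
  "('a::comm_ring_1 \<Rightarrow> 'b::ab_group_add \<Rightarrow> 'b) \<Rightarrow> ('g \<Rightarrow> 'a set) \<Rightarrow> ('g \<Rightarrow> 'b set) \<Rightarrow> 'b set \<Rightarrow> bool" where
  "gr_prime_submodule scale Rg Mg P \<longleftrightarrow> gr_submodule scale Mg P \<and> P \<noteq> UNIV \<and>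
     (\<forall>r\<in>homog Rg. \<forall>m\<in>homog Mg. scale r m \<in> P \<longrightarrow> m \<in> P \<or> r \<in> colon scale P)"

text \<open>Gr_M(K): intersection of graded prime submodules containing K (M = UNIV if none).\<close>
definition GrM ::
  "('a::comm_ring_1 \<Rightarrow> 'b::ab_group_add \<Rightarrow> 'b) \<Rightarrow> ('g \<Rightarrow> 'a set) \<Rightarrow> ('g \<Rightarrow> 'b set) \<Rightarrow> 'b set \<Rightarrow> 'b set" where
  "GrM scale Rg Mg K = \<Inter>{P. gr_prime_submodule scale Rg Mg P \<and> K \<subseteq> P}"

definition gr_primeful ::
  "('a::comm_ring_1 \<Rightarrow> 'b::ab_group_add \<Rightarrow> 'b) \<Rightarrow> ('g \<Rightarrow> 'a set) \<Rightarrow> ('g \<Rightarrow> 'b set) \<Rightarrow> 'b set \<Rightarrow> bool" where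
  "gr_primeful scale Rg Mg K \<longleftrightarrow>
     (\<forall>p. gr_prime_ideal Rg p \<and> colon scale K \<subseteq> p \<longrightarrow>
        (\<exists>P. gr_prime_submodule scale Rg Mg P \<and> K \<subseteq> P \<and> colon scale P = p))"

definition gr_quasi_primary_submodule ::
  "('a::comm_ring_1 \<Rightarrow> 'b::ab_group_add \<Rightarrow> 'b) \<Rightarrow> ('g \<Rightarrow> 'a set) \<Rightarrow> ('g \<Rightarrow> 'b set) \<Rightarrow> 'b set \<Rightarrow> bool" where
  "gr_quasi_primary_submodule scale Rg Mg Q \<longleftrightarrow> gr_submodule scale Mg Q \<and> Q \<noteq> UNIV \<and>
     (\<forall>r\<in>homog Rg. \<forall>m\<in>homog Mg. scale r m \<in> Q \<longrightarrow>
        r \<in> Gr Rg (colon scale Q) \<or> m \<in> GrM scale Rg Mg Q)"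

definition qpSpec ::
  "('a::comm_ring_1 \<Rightarrow> 'b::ab_group_add \<Rightarrow> 'b) \<Rightarrow> ('g \<Rightarrow> 'a set) \<Rightarrow> ('g \<Rightarrow> 'b set) \<Rightarrow> 'b set set" where
  "qpSpec scale Rg Mg = {Q. gr_quasi_primary_submodule scale Rg Mg Q \<and> gr_primeful scale Rg Mg Q}"

definition qpV ::
  "('a::comm_ring_1 \<Rightarrow> 'b::ab_group_add \<Rightarrow> 'b) \<Rightarrow> ('g \<Rightarrow> 'a set) \<Rightarrow> ('g \<Rightarrow> 'b set) \<Rightarrow> 'b set \<Rightarrow> 'b set set" where
  "qpV scale Rg Mg K = {Q \<in> qpSpec scale Rg Mg. Gr Rg (colon scale K) \<subseteq> Gr Rg (colon scale Q)}"

definition qp_open ::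
  "('a::comm_ring_1 \<Rightarrow> 'b::ab_group_add \<Rightarrow> 'b) \<Rightarrow> ('g \<Rightarrow> 'a set) \<Rightarrow> ('g \<Rightarrow> 'b set) \<Rightarrow> 'b set set \<Rightarrow> bool" where
  "qp_open scale Rg Mg U \<longleftrightarrow>
     (\<exists>K. gr_submodule scale Mg K \<and> U = qpSpec scale Rg Mg - qpV scale Rg Mg K)"

definition qp_quasi_compact_open ::
  "('a::comm_ring_1 \<Rightarrow> 'b::ab_group_add \<Rightarrow> 'b) \<Rightarrow> ('g \<Rightarrow> 'a set) \<Rightarrow> ('g \<Rightarrow> 'b set) \<Rightarrow> 'b set set \<Rightarrow> bool" where
  "qp_quasi_compact_open scale Rg Mg U \<longleftrightarrow> qp_open scale Rg Mg U \<and>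
     (\<forall>\<U>. (\<forall>W\<in>\<U>. qp_open scale Rg Mg W) \<and> U \<subseteq> \<Union>\<U> \<longrightarrow>
        (\<exists>\<F>\<subseteq>\<U>. finite \<F> \<and> U \<subseteq> \<Union>\<F>))"

text \<open>Graded quasi-primary ideals of R (used for those of R/Ann(M) via correspondence).\<close>
definition gr_quasi_primary_ideal :: "('g \<Rightarrow> 'a::comm_ring_1 set) \<Rightarrow> 'a set \<Rightarrow> bool" where
  "gr_quasi_primary_ideal Rg q \<longleftrightarrow> gr_ideal Rg q \<and> q \<noteq> UNIV \<and>
     (\<forall>a\<in>homog Rg. \<forall>b\<in>homog Rg. a * b \<in> q \<longrightarrow> a \<in> Gr Rg q \<or> b \<in> Gr Rg q)"

text \<open>Surjectivity of psi^q : qp.Spec_g(M) -> qp.Spec_g(R/Ann(M)), Q |-> (Q:M)/Ann(M).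
  Graded quasi-primary ideals of R/Ann(M) are exactly q/Ann(M) for graded
  quasi-primary ideals q of R containing Ann(M); so surjectivity says every such q
  is (Q:M) for some Q in qp.Spec_g(M).\<close>
definition psi_q_surjective ::
  "('a::comm_ring_1 \<Rightarrow> 'b::ab_group_add \<Rightarrow> 'b) \<Rightarrow> ('g \<Rightarrow> 'a set) \<Rightarrow> ('g \<Rightarrow> 'b set) \<Rightarrow> bool" where
  "psi_q_surjective scale Rg Mg \<longleftrightarrow>
     (\<forall>q. gr_quasi_primary_ideal Rg q \<and> Ann scale \<subseteq> q \<longrightarrow>
        (\<exists>Q\<in>qpSpec scale Rg Mg. colon scale Q = q))"

end

(* For homogeneous c let D(c) (qp_basic_open c) be the set of Q in qp.Spec_g(M) with c not in
   Gr((Q:M)). The complement of qp-V(K) is the union of the D(e) over homogeneous e in (K:M),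
   and every union of D(c)'s is open, so the D(c) form a base. For Q in qp.Spec_g(M),
   primefulness shows that a homogeneous element lies in Gr((Q:M)) iff it lies in (P:M) for
   every graded prime submodule P above Q, and quasi-primality then makes these homogeneous
   elements behave like a prime ideal. Hence D(ab) = D(a) \<inter> D(b). If D(c) is covered by
   the D(e), e in E, then a power of c lies in the ideal generated by E and Ann(M): otherwise a
   graded prime ideal p containing that ideal and avoiding the powers of c is quasi-primary and
   contains Ann(M), so by surjectivity of psi^q it is (Q:M) for some Q, which lies in D(c) but
   in no D(e). Writing the power of c as a finite combination gives a finite subcover, so each
   D(c) is quasi-compact. The quasi-compact open sets are thus exactly the finite unions of
   D(c)'s, and these are closed under intersection. *)

theory Submission
  imports Defs
begin

lemma gr_decomp_comp:
  assumes "direct_sum_grading A"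
  shows "gr_decomp A x (comp A x)"
proof -
  from assms have "\<exists>!f. gr_decomp A x f" by (simp add: direct_sum_grading_def)
  then show ?thesis unfolding comp_def by (rule theI')
qed

lemma comp_in_grade: "direct_sum_grading A \<Longrightarrow> comp A x g \<in> A g"
  using gr_decomp_comp[of A x] by (simp add: gr_decomp_def)

lemma finite_comp_support: "direct_sum_grading A \<Longrightarrow> finite {g. comp A x g \<noteq> 0}"
  using gr_decomp_comp[of A x] by (simp add: gr_decomp_def)

lemma comp_homog: "direct_sum_grading A \<Longrightarrow> comp A x g \<in> homog A"
  using comp_in_grade[of A x g] by (auto simp: homog_def)

lemma sum_comp_eq:
  assumes "direct_sum_grading A" "finite S" "{g. comp A x g \<noteq> 0} \<subseteq> S"
  shows "(\<Sum>g\<in>S. comp A x g) = x"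
proof -
  have "(\<Sum>g\<in>S. comp A x g) = (\<Sum>g\<in>{g. comp A x g \<noteq> 0}. comp A x g)"
    by (rule sum.mono_neutral_right) (use assms in auto)
  also have "\<dots> = x"
    using gr_decomp_comp[OF assms(1), of x] by (simp add: gr_decomp_def)
  finally show ?thesis .
qed

lemma comp_unique:
  assumes A: "direct_sum_grading A" and "finite S"
    and "\<And>g. f g \<in> A g" and "\<And>g. g \<notin> S \<Longrightarrow> f g = 0" and "x = (\<Sum>g\<in>S. f g)"
  shows "comp A x = f"
proof -
  have supp: "{g. f g \<noteq> 0} \<subseteq> S" using assms(4) by blast
  have "x = (\<Sum>g\<in>{g. f g \<noteq> 0}. f g)"
    unfolding assms(5) by (rule sum.mono_neutral_right) (use assms supp in auto)
  then have "gr_decomp A x f"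
    using finite_subset[OF supp \<open>finite S\<close>] assms(3) by (simp add: gr_decomp_def)
  moreover from A have "\<exists>!f. gr_decomp A x f" by (simp add: direct_sum_grading_def)
  ultimately show ?thesis unfolding comp_def by (simp add: the1_equality)
qed

lemma comp_of_mem_grade:
  assumes "direct_sum_grading A" "x \<in> A d"
  shows "comp A x = (\<lambda>g. if g = d then x else 0)"
  by (rule comp_unique[where S="{d}"]) (use assms in \<open>auto simp: direct_sum_grading_def\<close>)

lemma comp_additive_shift:
  fixes \<phi> :: "'x::ab_group_add \<Rightarrow> 'y::ab_group_add" and h :: "'g::group_add"
  assumes A: "direct_sum_grading A" and B: "direct_sum_grading B" and "additive \<phi>"
    and shift: "\<And>k a. a \<in> A k \<Longrightarrow> \<phi> a \<in> B (k + h)"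
  shows "comp B (\<phi> x) g = \<phi> (comp A x (g - h))"
proof -
  interpret additive \<phi> by fact
  let ?S = "(\<lambda>k. k + h) ` {k. comp A x k \<noteq> 0}"
  have "comp B (\<phi> x) = (\<lambda>g. \<phi> (comp A x (g - h)))"
  proof (rule comp_unique[OF B])
    show "finite ?S" using finite_comp_support[OF A] by blast
    show "\<phi> (comp A x (g - h)) \<in> B g" for g
      using shift[OF comp_in_grade[OF A], of x "g - h"] by simp
    show "\<phi> (comp A x (g - h)) = 0" if "g \<notin> ?S" for g
    proof -
      have "comp A x (g - h) = 0" using that by (metis (mono_tags) diff_add_cancel image_eqI mem_Collect_eq)
      then show ?thesis by (simp add: zero)
    qed
    have "inj_on (\<lambda>k. k + h) {k. comp A x k \<noteq> 0}" by (auto simp: inj_on_def)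
    then have "(\<Sum>g\<in>?S. \<phi> (comp A x (g - h))) = \<phi> (\<Sum>k | comp A x k \<noteq> 0. comp A x k)"
      by (simp add: sum.reindex sum)
    then show "\<phi> x = (\<Sum>g\<in>?S. \<phi> (comp A x (g - h)))"
      using sum_comp_eq[OF A finite_comp_support[OF A] order_refl] by simp
  qed
  then show ?thesis by simp
qed

lemma comp_add:
  assumes A: "direct_sum_grading A"
  shows "comp A (x + y) g = comp A x g + comp A y g"
proof -
  let ?S = "{g. comp A x g \<noteq> 0} \<union> {g. comp A y g \<noteq> 0}"
  have fin: "finite ?S" using finite_comp_support[OF A] by auto
  have "comp A (x + y) = (\<lambda>g. comp A x g + comp A y g)"
  proof (rule comp_unique[OF A fin])
    show "comp A x g + comp A y g \<in> A g" for g
      using A comp_in_grade[OF A] by (simp add: direct_sum_grading_def)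
    show "x + y = (\<Sum>g\<in>?S. comp A x g + comp A y g)"
      by (simp add: sum.distrib sum_comp_eq[OF A fin])
  qed auto
  then show ?thesis by simp
qed

lemma additive_comp: "direct_sum_grading A \<Longrightarrow> additive (\<lambda>x. comp A x g)"
  by (simp add: additive_def comp_add)

lemma mem_if_comps_mem:
  assumes A: "direct_sum_grading A" and "0 \<in> N" and "\<And>x y. x \<in> N \<Longrightarrow> y \<in> N \<Longrightarrow> x + y \<in> N"
    and "\<And>g. comp A x g \<in> N"
  shows "x \<in> N"
proof -
  have "(\<Sum>g | comp A x g \<noteq> 0. comp A x g) \<in> N"
    using finite_comp_support[OF A, of x] by induction (use assms in auto)
  then show ?thesis using sum_comp_eq[OF A finite_comp_support[OF A] order_refl] by simp
qed

lemma Gr_homog_iff: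
  assumes "direct_sum_grading Rg" "x \<in> homog Rg" "0 \<in> I"
  shows "x \<in> Gr Rg I \<longleftrightarrow> (\<exists>n>0. x ^ n \<in> I)"
proof -
  obtain d where "x \<in> Rg d" using assms(2) by (auto simp: homog_def)
  then show ?thesis using assms(1,3) by (auto simp: Gr_def comp_of_mem_grade intro: exI[of _ 1])
qed

lemma colon_mono: "Q \<subseteq> P \<Longrightarrow> colon scale Q \<subseteq> colon scale P"
  by (auto simp: colon_def)

lemma qp_quasi_compact_open_Union:
  assumes "finite \<V>" and compact: "\<And>V. V \<in> \<V> \<Longrightarrow> qp_quasi_compact_open scale Rg Mg V"
    and "qp_open scale Rg Mg (\<Union>\<V>)"
  shows "qp_quasi_compact_open scale Rg Mg (\<Union>\<V>)"
  unfolding qp_quasi_compact_open_def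
proof (intro conjI allI impI)
  show "qp_open scale Rg Mg (\<Union>\<V>)" by fact
  fix \<U> assume \<U>: "(\<forall>W\<in>\<U>. qp_open scale Rg Mg W) \<and> \<Union>\<V> \<subseteq> \<Union>\<U>"
  have "\<exists>\<F>. \<F> \<subseteq> \<U> \<and> finite \<F> \<and> V \<subseteq> \<Union>\<F>" if "V \<in> \<V>" for V
  proof -
    have "V \<subseteq> \<Union>\<U>" using \<U> that by blast
    with compact[OF that] \<U> show ?thesis unfolding qp_quasi_compact_open_def by blast
  qed
  then obtain \<F> where \<F>: "\<And>V. V \<in> \<V> \<Longrightarrow> \<F> V \<subseteq> \<U> \<and> finite (\<F> V) \<and> V \<subseteq> \<Union>(\<F> V)"
    by metis
  have "\<Union>(\<F> ` \<V>) \<subseteq> \<U>" and "finite (\<Union>(\<F> ` \<V>))"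
    using \<F> \<open>finite \<V>\<close> by auto
  moreover have "\<Union>\<V> \<subseteq> \<Union>(\<Union>(\<F> ` \<V>))"
  proof
    fix x assume "x \<in> \<Union>\<V>"
    then obtain V where "V \<in> \<V>" "x \<in> V" by blast
    then show "x \<in> \<Union>(\<Union>(\<F> ` \<V>))" using \<F>[OF \<open>V \<in> \<V>\<close>] by blast
  qed
  ultimately show "\<exists>\<F>'\<subseteq>\<U>. finite \<F>' \<and> \<Union>\<V> \<subseteq> \<Union>\<F>'" by blast
qed

locale gr_ring =
  fixes Rg :: "'g::group_add \<Rightarrow> 'a::comm_ring_1 set"
  assumes graded_ring: "graded_ring Rg"
begin

lemma grading: "direct_sum_grading Rg"
  using graded_ring by (simp add: graded_ring_def)

lemma mult_grade: "a \<in> Rg g \<Longrightarrow> b \<in> Rg h \<Longrightarrow> a * b \<in> Rg (g + h)"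
  using graded_ring by (simp add: graded_ring_def)

text \<open>The ring as a module over itself: \<open>R.span E\<close> is the ideal generated by \<open>E\<close> and
  the ideals are the sets \<open>I\<close> with \<open>R.subspace I\<close>. Its simp rule \<open>R.scale_scale\<close>,
  \<open>a * (b * x) = a * b * x\<close>, would make the simplifier loop against \<open>mult.assoc\<close>.\<close>
sublocale R: module "(*) :: 'a \<Rightarrow> 'a \<Rightarrow> 'a"
  by standard (simp_all add: algebra_simps)

declare R.scale_scale [simp del]

lemma gr_ideal_iff: "gr_ideal Rg I \<longleftrightarrow> R.subspace I \<and> graded_set Rg I"
  by (auto simp: gr_ideal_def R.subspace_def)

lemma homog_mult: "a \<in> homog Rg \<Longrightarrow> b \<in> homog Rg \<Longrightarrow> a * b \<in> homog Rg"
  using mult_grade by (simp add: homog_def) blast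

lemma homog_power: "a \<in> homog Rg \<Longrightarrow> n > 0 \<Longrightarrow> a ^ n \<in> homog Rg"
proof (induction n)
  case (Suc n)
  then show ?case by (cases "n = 0") (simp_all add: homog_mult)
qed simp

lemma comp_mult_mem_grade: "e \<in> Rg h \<Longrightarrow> comp Rg (r * e) g = comp Rg r (g - h) * e"
  by (rule comp_additive_shift[OF grading grading])
    (auto simp: additive_def algebra_simps intro: mult_grade)

lemma Gr_of_power:
  assumes "c \<in> homog Rg" "0 \<in> I" "n > 0" "c ^ n \<in> Gr Rg I"
  shows "c \<in> Gr Rg I"
proof -
  obtain k where "k > 0" "c ^ (n * k) \<in> I"
    using Gr_homog_iff[OF grading homog_power[OF assms(1,3)] assms(2)] assms(4) by (auto simp: power_mult)
  then show ?thesis using Gr_homog_iff[OF grading assms(1,2)] assms(3) by (meson nat_0_less_mult_iff)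
qed

lemma subset_Gr: "gr_ideal Rg I \<Longrightarrow> I \<subseteq> Gr Rg I"
  by (auto simp: Gr_def gr_ideal_def graded_set_def intro: exI[of _ 1])

lemma Gr_mult_homog:
  assumes I: "gr_ideal Rg I" and a: "a \<in> homog Rg" and b: "b \<in> homog Rg" and "a \<in> Gr Rg I"
  shows "a * b \<in> Gr Rg I"
proof -
  have "0 \<in> I" using I by (simp add: gr_ideal_def)
  then obtain n where "n > 0" "a ^ n \<in> I" using Gr_homog_iff[OF grading a] \<open>a \<in> Gr Rg I\<close> by blast
  moreover have "(a * b) ^ n = b ^ n * a ^ n" by (simp add: power_mult_distrib)
  ultimately show ?thesis
    using I Gr_homog_iff[OF grading homog_mult[OF a b] \<open>0 \<in> I\<close>] by (auto simp: gr_ideal_def)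
qed

lemma gr_ideal_span:
  assumes E: "E \<subseteq> homog Rg"
  shows "gr_ideal Rg (R.span E)"
  unfolding gr_ideal_iff graded_set_def
proof (intro conjI R.subspace_span ballI allI)
  fix x g assume "x \<in> R.span E"
  then obtain F r where F: "finite F" "F \<subseteq> E" and x: "x = (\<Sum>e\<in>F. r e * e)"
    by (auto simp: R.span_explicit)
  obtain deg where deg: "\<And>e. e \<in> F \<Longrightarrow> e \<in> Rg (deg e)"
    using F(2) E by (simp add: homog_def subset_iff) metis
  have "comp Rg x g = (\<Sum>e\<in>F. comp Rg (r e * e) g)"
    unfolding x by (rule additive.sum[OF additive_comp[OF grading]])
  also have "\<dots> = (\<Sum>e\<in>F. comp Rg (r e) (g - deg e) * e)"
    by (intro sum.cong) (simp_all add: deg comp_mult_mem_grade)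
  also have "\<dots> \<in> R.span E"
    using F by (intro R.span_sum) (auto intro: R.span_scale R.span_base)
  finally show "comp Rg x g \<in> R.span E" .
qed

lemma span_homog_eq_gr_ideal:
  assumes I: "gr_ideal Rg I"
  shows "R.span (I \<inter> homog Rg) = I"
proof
  show "R.span (I \<inter> homog Rg) \<subseteq> I"
    using I by (intro R.span_minimal) (auto simp: gr_ideal_iff)
  show "I \<subseteq> R.span (I \<inter> homog Rg)"
  proof
    fix x assume "x \<in> I"
    then have "comp Rg x g \<in> I \<inter> homog Rg" for g
      using I comp_homog[OF grading] by (simp add: gr_ideal_def graded_set_def)
    then show "x \<in> R.span (I \<inter> homog Rg)"
      using R.span_zero R.span_add R.span_base by (blast intro: mem_if_comps_mem[OF grading])
  qed
qed

lemma gr_ideal_Union_chain: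
  assumes "\<C> \<noteq> {}" and ideals: "\<And>I. I \<in> \<C> \<Longrightarrow> gr_ideal Rg I"
    and chain: "\<And>I J. I \<in> \<C> \<Longrightarrow> J \<in> \<C> \<Longrightarrow> I \<subseteq> J \<or> J \<subseteq> I"
  shows "gr_ideal Rg (\<Union>\<C>)"
  unfolding gr_ideal_def
proof (intro conjI ballI allI)
  show "0 \<in> \<Union>\<C>" using assms(1) ideals by (auto simp: gr_ideal_def)
  fix x y assume "x \<in> \<Union>\<C>" "y \<in> \<Union>\<C>"
  then obtain I J where "x \<in> I" "I \<in> \<C>" "y \<in> J" "J \<in> \<C>" by blast
  with chain[of I J] ideals[of I] ideals[of J] show "x + y \<in> \<Union>\<C>"
    unfolding gr_ideal_def by blast
next
  show "r * x \<in> \<Union>\<C>" if "x \<in> \<Union>\<C>" for r x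
    using that ideals by (auto simp: gr_ideal_def)
  show "graded_set Rg (\<Union>\<C>)"
    using ideals by (fastforce simp: gr_ideal_def graded_set_def)
qed

lemma gr_prime_ideal_power_mem:
  assumes p: "gr_prime_ideal Rg p" and c: "c \<in> homog Rg"
  shows "n > 0 \<Longrightarrow> c ^ n \<in> p \<Longrightarrow> c \<in> p"
proof (induction n)
  case (Suc n)
  show ?case
  proof (cases "n = 0")
    case False
    have "c * c ^ n \<in> p" using Suc.prems(2) by simp
    then have "c \<in> p \<or> c ^ n \<in> p"
      using p c homog_power[OF c] False unfolding gr_prime_ideal_def by blast
    then show ?thesis using Suc.IH False by blast
  qed (use Suc.prems in simp)
qed simp

lemma gr_prime_imp_quasi_primary: "gr_prime_ideal Rg p \<Longrightarrow> gr_quasi_primary_ideal Rg p"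
  using subset_Gr by (fastforce simp: gr_prime_ideal_def gr_quasi_primary_ideal_def)

lemma gr_ideal_span_insert:
  assumes p: "gr_ideal Rg p" and x: "x \<in> homog Rg"
  shows "gr_ideal Rg (R.span (insert x p))"
proof -
  have span_p: "R.span p = p" using p by (simp add: gr_ideal_iff)
  have "R.span (insert x p) = R.span (insert x (p \<inter> homog Rg))"
    unfolding R.span_insert span_p span_homog_eq_gr_ideal[OF p] ..
  then show ?thesis using x by (simp add: gr_ideal_span)
qed

lemma gr_prime_if_maximal_avoiding_powers:
  assumes p: "gr_ideal Rg p" and avoid: "\<forall>n>0. c ^ n \<notin> p"
    and maximal: "\<And>J. gr_ideal Rg J \<Longrightarrow> p \<subseteq> J \<Longrightarrow> \<forall>n>0. c ^ n \<notin> J \<Longrightarrow> J = p"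
  shows "gr_prime_ideal Rg p"
proof -
  have p_add: "u + v \<in> p" if "u \<in> p" "v \<in> p" for u v
    using p that by (simp add: gr_ideal_def)
  have p_mult: "r * u \<in> p" if "u \<in> p" for r u
    using p that by (simp add: gr_ideal_def)
  have extend: "\<exists>n>0. \<exists>u\<in>p. \<exists>k. c ^ n = u + k * x" if x: "x \<in> homog Rg" "x \<notin> p" for x
  proof -
    let ?J = "R.span (insert x p)"
    have "?J \<noteq> p" using x R.span_base[of x] by blast
    moreover have "p \<subseteq> ?J" using R.span_superset by blast
    ultimately obtain n where "n > 0" "c ^ n \<in> ?J"
      using maximal[OF gr_ideal_span_insert[OF p x(1)]] by blast
    moreover have "R.span p = p" using p by (simp add: gr_ideal_iff)
    ultimately obtain k where "n > 0" "c ^ n - k * x \<in> p" unfolding R.span_insert by blast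
    moreover have "c ^ n = (c ^ n - k * x) + k * x" by simp
    ultimately show ?thesis by blast
  qed
  have prime: "\<forall>a\<in>homog Rg. \<forall>b\<in>homog Rg. a * b \<in> p \<longrightarrow> a \<in> p \<or> b \<in> p"
  proof (intro ballI impI, rule ccontr)
    fix a b assume a: "a \<in> homog Rg" and b: "b \<in> homog Rg" and ab: "a * b \<in> p"
    assume "\<not> (a \<in> p \<or> b \<in> p)"
    then obtain n u k m v l where n: "n > 0" "u \<in> p" "c ^ n = u + k * a"
      and m: "m > 0" "v \<in> p" "c ^ m = v + l * b"
      using extend[OF a] extend[OF b] by blast
    have "c ^ (n + m) = (u + k * a) * (v + l * b)"
      unfolding power_add n(3) m(3) ..
    also have "\<dots> = (v + l * b) * u + (k * a) * v + (k * l) * (a * b)"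
      by (simp add: algebra_simps)
    also have "\<dots> \<in> p"
      by (intro p_add p_mult[OF n(2)] p_mult[OF m(2)] p_mult[OF ab])
    finally show False using avoid n(1) by simp
  qed
  have "c \<notin> p" using avoid[rule_format, of 1] by simp
  then have "p \<noteq> UNIV" by blast
  with p prime show ?thesis unfolding gr_prime_ideal_def by (intro conjI)
qed

lemma gr_prime_avoiding_powers:
  assumes I: "gr_ideal Rg I" and avoid: "\<forall>n>0. c ^ n \<notin> I"
  shows "\<exists>p. gr_prime_ideal Rg p \<and> I \<subseteq> p \<and> (\<forall>n>0. c ^ n \<notin> p)"
proof -
  define \<A> where "\<A> = {J. gr_ideal Rg J \<and> I \<subseteq> J \<and> (\<forall>n>0. c ^ n \<notin> J)}"
  have "\<exists>p\<in>\<A>. \<forall>J\<in>\<A>. p \<subseteq> J \<longrightarrow> J = p"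
  proof (rule subset_Zorn_nonempty)
    show "\<A> \<noteq> {}" using I avoid by (auto simp: \<A>_def)
    fix \<C> assume "\<C> \<noteq> {}" "subset.chain \<A> \<C>"
    then show "\<Union>\<C> \<in> \<A>"
      using gr_ideal_Union_chain[of \<C>] by (auto simp: \<A>_def subset.chain_def)
  qed
  then obtain p where "p \<in> \<A>" and "\<And>J. J \<in> \<A> \<Longrightarrow> p \<subseteq> J \<Longrightarrow> J = p" by blast
  then show ?thesis
    using gr_prime_if_maximal_avoiding_powers[of p c] by (auto simp: \<A>_def)
qed

end

locale gr_module =
  fixes scale :: "'a::comm_ring_1 \<Rightarrow> 'b::ab_group_add \<Rightarrow> 'b"
    and Rg :: "'g::group_add \<Rightarrow> 'a set"
    and Mg :: "'g \<Rightarrow> 'b set"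
  assumes graded_module: "graded_module scale Rg Mg"
begin

sublocale gr_ring Rg
  using graded_module by unfold_locales (simp add: graded_module_def)

sublocale module scale
  using graded_module by (simp add: graded_module_def)

lemma module_grading: "direct_sum_grading Mg"
  using graded_module by (simp add: graded_module_def)

lemma scale_grade: "a \<in> Rg g \<Longrightarrow> m \<in> Mg h \<Longrightarrow> scale a m \<in> Mg (g + h)"
  using graded_module by (simp add: graded_module_def)

lemma homog_scale: "a \<in> homog Rg \<Longrightarrow> m \<in> homog Mg \<Longrightarrow> scale a m \<in> homog Mg"
  using scale_grade by (simp add: homog_def) blast

lemma gr_submodule_iff: "gr_submodule scale Mg N \<longleftrightarrow> subspace N \<and> graded_set Mg N"
  by (auto simp: gr_submodule_def subspace_def)

lemma comp_scale_mem_grade: "m \<in> Mg h \<Longrightarrow> comp Mg (scale r m) g = scale (comp Rg r (g - h)) m"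
  by (rule comp_additive_shift[OF grading module_grading])
    (auto simp: additive_def scale_left_distrib intro: scale_grade)

lemma colon_memI_homog:
  assumes N: "gr_submodule scale Mg N" and homog_mem: "\<And>m. m \<in> homog Mg \<Longrightarrow> scale b m \<in> N"
  shows "b \<in> colon scale N"
proof -
  have "scale b m \<in> N" for m
  proof -
    have "scale b m = scale b (\<Sum>g | comp Mg m g \<noteq> 0. comp Mg m g)"
      by (simp add: sum_comp_eq[OF module_grading finite_comp_support[OF module_grading]])
    also have "\<dots> = (\<Sum>g | comp Mg m g \<noteq> 0. scale b (comp Mg m g))"
      by (rule scale_sum_right)
    also have "\<dots> \<in> N"
      using N homog_mem comp_homog[OF module_grading] by (intro subspace_sum) (auto simp: gr_submodule_iff)
    finally show ?thesis .
  qed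
  then show ?thesis by (simp add: colon_def)
qed

lemma gr_ideal_colon:
  assumes N: "gr_submodule scale Mg N"
  shows "gr_ideal Rg (colon scale N)"
  unfolding gr_ideal_iff graded_set_def
proof (intro conjI R.subspaceI ballI allI)
  have N_sub: "subspace N" using N by (simp add: gr_submodule_iff)
  show "0 \<in> colon scale N" using N_sub by (simp add: colon_def subspace_0)
  show "x + y \<in> colon scale N" if "x \<in> colon scale N" "y \<in> colon scale N" for x y
    using N_sub that by (simp add: colon_def scale_left_distrib subspace_add)
  show "c * x \<in> colon scale N" if "x \<in> colon scale N" for c x
    using N_sub that by (simp add: colon_def subspace_scale flip: scale_scale)
next
  fix r g assume r: "r \<in> colon scale N"
  show "comp Rg r g \<in> colon scale N"
  proof (rule colon_memI_homog[OF N])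
    fix m assume "m \<in> homog Mg"
    then obtain h where m: "m \<in> Mg h" by (auto simp: homog_def)
    have "comp Mg (scale r m) (g + h) \<in> N"
      using r N by (simp add: colon_def gr_submodule_def graded_set_def)
    then show "scale (comp Rg r g) m \<in> N" by (simp add: comp_scale_mem_grade[OF m])
  qed
qed

lemma gr_ideal_Ann: "gr_ideal Rg (Ann scale)"
proof -
  have "comp Mg 0 g = 0" for g
    using additive.zero[OF additive_comp[OF module_grading]] .
  then have "gr_submodule scale Mg {0}"
    by (simp add: gr_submodule_def graded_set_def)
  then show ?thesis unfolding Ann_def by (rule gr_ideal_colon)
qed

lemma gr_prime_ideal_colon:
  assumes P: "gr_prime_submodule scale Rg Mg P"
  shows "gr_prime_ideal Rg (colon scale P)"
proof -
  have sub: "gr_submodule scale Mg P" and "P \<noteq> UNIV"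
    and prime: "\<And>r m. r \<in> homog Rg \<Longrightarrow> m \<in> homog Mg \<Longrightarrow> scale r m \<in> P \<Longrightarrow>
      m \<in> P \<or> r \<in> colon scale P"
    using P unfolding gr_prime_submodule_def by blast+
  have "1 \<notin> colon scale P" using \<open>P \<noteq> UNIV\<close> by (auto simp: colon_def)
  moreover have "b \<in> colon scale P" if a: "a \<in> homog Rg" and b: "b \<in> homog Rg"
    and ab: "a * b \<in> colon scale P" and a_notin: "a \<notin> colon scale P" for a b
  proof (rule colon_memI_homog[OF sub])
    fix m assume "m \<in> homog Mg"
    moreover have "scale a (scale b m) \<in> P" using ab by (simp add: colon_def)
    ultimately show "scale b m \<in> P" using prime[OF a homog_scale[OF b]] a_notin by blast
  qed
  ultimately show ?thesis using gr_ideal_colon[OF sub] unfolding gr_prime_ideal_def by blast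
qed

lemma mem_prime_colon_if_power_mem_colon:
  assumes P: "gr_prime_submodule scale Rg Mg P" and "Q \<subseteq> P" and c: "c \<in> homog Rg"
    and n: "n > 0" "c ^ n \<in> colon scale Q"
  shows "c \<in> colon scale P"
proof -
  have "c ^ n \<in> colon scale P" using n(2) colon_mono[of Q P scale] \<open>Q \<subseteq> P\<close> by blast
  then show ?thesis by (rule gr_prime_ideal_power_mem[OF gr_prime_ideal_colon[OF P] c n(1)])
qed

lemma power_mem_colon_if_mem_prime_colons:
  assumes Q: "gr_submodule scale Mg Q" and primeful: "gr_primeful scale Rg Mg Q"
    and all: "\<And>P. gr_prime_submodule scale Rg Mg P \<Longrightarrow> Q \<subseteq> P \<Longrightarrow> c \<in> colon scale P"
  shows "\<exists>n>0. c ^ n \<in> colon scale Q"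
proof (rule ccontr)
  assume "\<not> (\<exists>n>0. c ^ n \<in> colon scale Q)"
  then obtain p where p: "gr_prime_ideal Rg p" "colon scale Q \<subseteq> p" "\<forall>n>0. c ^ n \<notin> p"
    using gr_prime_avoiding_powers[OF gr_ideal_colon[OF Q]] by blast
  then obtain P where "gr_prime_submodule scale Rg Mg P" "Q \<subseteq> P" "colon scale P = p"
    using primeful unfolding gr_primeful_def by blast
  then have "c \<in> p" using all by blast
  then show False using p(3)[rule_format, of 1] by simp
qed

lemma Gr_colon_iff_prime_colons:
  assumes Q: "gr_submodule scale Mg Q" and primeful: "gr_primeful scale Rg Mg Q"
    and c: "c \<in> homog Rg"
  shows "c \<in> Gr Rg (colon scale Q) \<longleftrightarrow>
    (\<forall>P. gr_prime_submodule scale Rg Mg P \<and> Q \<subseteq> P \<longrightarrow> c \<in> colon scale P)"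
proof -
  have "0 \<in> colon scale Q" using gr_ideal_colon[OF Q] by (simp add: gr_ideal_def)
  then have "c \<in> Gr Rg (colon scale Q) \<longleftrightarrow> (\<exists>n>0. c ^ n \<in> colon scale Q)"
    by (rule Gr_homog_iff[OF grading c])
  also have "\<dots> \<longleftrightarrow> (\<forall>P. gr_prime_submodule scale Rg Mg P \<and> Q \<subseteq> P \<longrightarrow> c \<in> colon scale P)"
  proof
    assume "\<exists>n>0. c ^ n \<in> colon scale Q"
    then obtain n where "n > 0" "c ^ n \<in> colon scale Q" by blast
    then show "\<forall>P. gr_prime_submodule scale Rg Mg P \<and> Q \<subseteq> P \<longrightarrow> c \<in> colon scale P"
      using mem_prime_colon_if_power_mem_colon[OF _ _ c] by blast
  next
    assume "\<forall>P. gr_prime_submodule scale Rg Mg P \<and> Q \<subseteq> P \<longrightarrow> c \<in> colon scale P"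
    then show "\<exists>n>0. c ^ n \<in> colon scale Q"
      by (intro power_mem_colon_if_mem_prime_colons[OF Q primeful]) blast
  qed
  finally show ?thesis .
qed

lemma qpSpecD:
  assumes "Q \<in> qpSpec scale Rg Mg"
  shows "gr_submodule scale Mg Q" and "gr_primeful scale Rg Mg Q"
  using assms by (simp_all add: qpSpec_def gr_quasi_primary_submodule_def)

lemma Gr_colon_homog_prime:
  assumes Q: "Q \<in> qpSpec scale Rg Mg" and a: "a \<in> homog Rg" and b: "b \<in> homog Rg"
    and ab: "a * b \<in> Gr Rg (colon scale Q)" and a_notin: "a \<notin> Gr Rg (colon scale Q)"
  shows "b \<in> Gr Rg (colon scale Q)"
proof -
  have quasi_primary: "\<And>r m. r \<in> homog Rg \<Longrightarrow> m \<in> homog Mg \<Longrightarrow> scale r m \<in> Q \<Longrightarrow>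
      r \<in> Gr Rg (colon scale Q) \<or> m \<in> GrM scale Rg Mg Q"
    using Q unfolding qpSpec_def gr_quasi_primary_submodule_def by blast
  have "0 \<in> colon scale Q" using gr_ideal_colon[OF qpSpecD(1)[OF Q]] by (simp add: gr_ideal_def)
  then obtain n where n: "n > 0" "(a * b) ^ n \<in> colon scale Q"
    using Gr_homog_iff[OF grading homog_mult[OF a b]] ab by blast
  have an_notin: "a ^ n \<notin> Gr Rg (colon scale Q)"
    using Gr_of_power[OF a \<open>0 \<in> colon scale Q\<close> n(1)] a_notin by blast
  have bn_GrM: "scale (b ^ n) m \<in> GrM scale Rg Mg Q" if m: "m \<in> homog Mg" for m
  proof -
    have "scale (a ^ n) (scale (b ^ n) m) \<in> Q"
      using n(2) by (simp add: colon_def power_mult_distrib)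
    then show ?thesis
      using quasi_primary[OF homog_power[OF a n(1)] homog_scale[OF homog_power[OF b n(1)] m]] an_notin
      by blast
  qed
  have "b \<in> colon scale P" if P: "gr_prime_submodule scale Rg Mg P" "Q \<subseteq> P" for P
  proof -
    have "b ^ n \<in> colon scale P"
    proof (rule colon_memI_homog)
      show "gr_submodule scale Mg P" using P(1) by (simp add: gr_prime_submodule_def)
      show "scale (b ^ n) m \<in> P" if "m \<in> homog Mg" for m
        using bn_GrM[OF that] P unfolding GrM_def by blast
    qed
    then show ?thesis by (rule gr_prime_ideal_power_mem[OF gr_prime_ideal_colon[OF P(1)] b n(1)])
  qed
  then show ?thesis using Gr_colon_iff_prime_colons[OF qpSpecD[OF Q] b] by blast
qed

lemma Gr_colon_if_mem_span:
  assumes Q: "Q \<in> qpSpec scale Rg Mg" and c: "c \<in> homog Rg" and F: "F \<subseteq> homog Rg"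
    and F_Gr: "\<And>e. e \<in> F \<Longrightarrow> e \<in> Gr Rg (colon scale Q)" and "c \<in> R.span F"
  shows "c \<in> Gr Rg (colon scale Q)"
proof -
  have "c \<in> colon scale P" if P: "gr_prime_submodule scale Rg Mg P" "Q \<subseteq> P" for P
  proof -
    have "e \<in> colon scale P" if "e \<in> F" for e
      using F_Gr[OF that] Gr_colon_iff_prime_colons[OF qpSpecD[OF Q] subsetD[OF F that]] P by blast
    moreover have "R.subspace (colon scale P)"
      using gr_ideal_colon P(1) by (simp add: gr_ideal_iff gr_prime_submodule_def)
    ultimately have "R.span F \<subseteq> colon scale P" by (intro R.span_minimal) auto
    then show ?thesis using \<open>c \<in> R.span F\<close> by blast
  qed
  then show ?thesis using Gr_colon_iff_prime_colons[OF qpSpecD[OF Q] c] by blast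
qed

definition qp_basic_open :: "'a \<Rightarrow> 'b set set" where
  "qp_basic_open c = {Q \<in> qpSpec scale Rg Mg. c \<notin> Gr Rg (colon scale Q)}"

lemma qp_basic_open_mult:
  assumes a: "a \<in> homog Rg" and b: "b \<in> homog Rg"
  shows "qp_basic_open (a * b) = qp_basic_open a \<inter> qp_basic_open b"
proof -
  have "a * b \<in> Gr Rg (colon scale Q) \<longleftrightarrow> a \<in> Gr Rg (colon scale Q) \<or> b \<in> Gr Rg (colon scale Q)"
    if Q: "Q \<in> qpSpec scale Rg Mg" for Q
  proof -
    have I: "gr_ideal Rg (colon scale Q)" by (rule gr_ideal_colon[OF qpSpecD(1)[OF Q]])
    show ?thesis
      using Gr_colon_homog_prime[OF Q a b] Gr_mult_homog[OF I a b]
        Gr_mult_homog[OF I b a, unfolded mult.commute[of b a]] by blast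
  qed
  then show ?thesis unfolding qp_basic_open_def by blast
qed

lemma qp_basic_open_Ann:
  assumes "e \<in> Ann scale"
  shows "qp_basic_open e = {}"
proof -
  have "e \<in> Gr Rg (colon scale Q)" if Q: "Q \<in> qpSpec scale Rg Mg" for Q
  proof -
    have "{0} \<subseteq> Q" using qpSpecD(1)[OF Q] by (simp add: gr_submodule_def)
    then have "e \<in> colon scale Q" using assms colon_mono[of "{0}" Q scale] by (auto simp: Ann_def)
    then show ?thesis using subset_Gr[OF gr_ideal_colon[OF qpSpecD(1)[OF Q]]] by blast
  qed
  then show ?thesis by (auto simp: qp_basic_open_def)
qed

lemma qpSpec_diff_qpV:
  assumes K: "gr_submodule scale Mg K"
  shows "qpSpec scale Rg Mg - qpV scale Rg Mg K = \<Union>(qp_basic_open ` (colon scale K \<inter> homog Rg))"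
proof -
  have "Q \<notin> qpV scale Rg Mg K \<longleftrightarrow> (\<exists>e \<in> colon scale K \<inter> homog Rg. e \<notin> Gr Rg (colon scale Q))"
    if Q: "Q \<in> qpSpec scale Rg Mg" for Q
  proof
    assume "Q \<notin> qpV scale Rg Mg K"
    then obtain r where r: "r \<in> Gr Rg (colon scale K)" "r \<notin> Gr Rg (colon scale Q)"
      using Q by (auto simp: qpV_def)
    then obtain g where g: "\<forall>n>0. comp Rg r g ^ n \<notin> colon scale Q" unfolding Gr_def by blast
    obtain n where n: "n > 0" "comp Rg r g ^ n \<in> colon scale K" using r(1) unfolding Gr_def by blast
    have rg: "comp Rg r g \<in> homog Rg" by (rule comp_homog[OF grading])
    have "0 \<in> colon scale Q" using gr_ideal_colon[OF qpSpecD(1)[OF Q]] by (simp add: gr_ideal_def)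
    then have "comp Rg r g \<notin> Gr Rg (colon scale Q)" using Gr_homog_iff[OF grading rg] g by blast
    then have "comp Rg r g ^ n \<notin> Gr Rg (colon scale Q)"
      using Gr_of_power[OF rg \<open>0 \<in> colon scale Q\<close> n(1)] by blast
    then show "\<exists>e \<in> colon scale K \<inter> homog Rg. e \<notin> Gr Rg (colon scale Q)"
      using n(2) homog_power[OF rg n(1)] by blast
  next
    assume "\<exists>e \<in> colon scale K \<inter> homog Rg. e \<notin> Gr Rg (colon scale Q)"
    then show "Q \<notin> qpV scale Rg Mg K"
      using subset_Gr[OF gr_ideal_colon[OF K]] by (auto simp: qpV_def)
  qed
  then show ?thesis unfolding qp_basic_open_def by blast
qed

lemma qp_open_Union_basic_open:
  assumes C: "C \<subseteq> homog Rg"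
  shows "qp_open scale Rg Mg (\<Union>(qp_basic_open ` C))"
proof -
  define K where "K = \<Inter>{N. gr_submodule scale Mg N \<and> (\<forall>c\<in>C. range (scale c) \<subseteq> N)}"
  have K: "gr_submodule scale Mg K"
    unfolding K_def gr_submodule_def graded_set_def by blast
  have C_colon: "C \<subseteq> colon scale K" by (auto simp: K_def colon_def)
  have "qpSpec scale Rg Mg - qpV scale Rg Mg K = \<Union>(qp_basic_open ` C)"
  proof
    show "\<Union>(qp_basic_open ` C) \<subseteq> qpSpec scale Rg Mg - qpV scale Rg Mg K"
      unfolding qpSpec_diff_qpV[OF K] using C C_colon by blast
    show "qpSpec scale Rg Mg - qpV scale Rg Mg K \<subseteq> \<Union>(qp_basic_open ` C)"
    proof
      fix Q assume "Q \<in> qpSpec scale Rg Mg - qpV scale Rg Mg K"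
      then obtain e where e: "e \<in> colon scale K" "e \<in> homog Rg" and Q_e: "Q \<in> qp_basic_open e"
        unfolding qpSpec_diff_qpV[OF K] by blast
      then have Q: "Q \<in> qpSpec scale Rg Mg" by (simp add: qp_basic_open_def)
      show "Q \<in> \<Union>(qp_basic_open ` C)"
      proof (rule ccontr)
        assume "Q \<notin> \<Union>(qp_basic_open ` C)"
        then have C_Gr: "c \<in> Gr Rg (colon scale Q)" if "c \<in> C" for c
          using that Q by (auto simp: qp_basic_open_def)
        have "e \<in> colon scale P" if P: "gr_prime_submodule scale Rg Mg P" "Q \<subseteq> P" for P
        proof -
          have "c \<in> colon scale P" if "c \<in> C" for c
            using C_Gr[OF that] Gr_colon_iff_prime_colons[OF qpSpecD[OF Q] subsetD[OF C that]] P
            by blast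
          then have "P \<in> {N. gr_submodule scale Mg N \<and> (\<forall>c\<in>C. range (scale c) \<subseteq> N)}"
            using P(1) by (auto simp: gr_prime_submodule_def colon_def)
          then have "K \<subseteq> P" unfolding K_def by (rule Inter_lower)
          then show ?thesis using e(1) colon_mono[of K P scale] by blast
        qed
        then have "e \<in> Gr Rg (colon scale Q)"
          using Gr_colon_iff_prime_colons[OF qpSpecD[OF Q] e(2)] by blast
        then show False using Q_e by (simp add: qp_basic_open_def)
      qed
    qed
  qed
  then show ?thesis using K unfolding qp_open_def by blast
qed

lemma qp_open_basic_open: "c \<in> homog Rg \<Longrightarrow> qp_open scale Rg Mg (qp_basic_open c)"
  using qp_open_Union_basic_open[of "{c}"] by simp

lemma qp_open_iff_Union_basic_open:
  "qp_open scale Rg Mg U \<longleftrightarrow> (\<exists>C\<subseteq>homog Rg. U = \<Union>(qp_basic_open ` C))"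
proof
  assume "qp_open scale Rg Mg U"
  then obtain K where "gr_submodule scale Mg K" "U = qpSpec scale Rg Mg - qpV scale Rg Mg K"
    unfolding qp_open_def by blast
  then show "\<exists>C\<subseteq>homog Rg. U = \<Union>(qp_basic_open ` C)"
    using qpSpec_diff_qpV by (intro exI[of _ "colon scale K \<inter> homog Rg"]) auto
qed (use qp_open_Union_basic_open in blast)

lemma power_mem_span_if_basic_cover:
  assumes surj: "psi_q_surjective scale Rg Mg" and c: "c \<in> homog Rg" and E: "E \<subseteq> homog Rg"
    and cover: "qp_basic_open c \<subseteq> \<Union>(qp_basic_open ` E)"
  shows "\<exists>n>0. c ^ n \<in> R.span (E \<union> (Ann scale \<inter> homog Rg))"
proof (rule ccontr)
  let ?J = "R.span (E \<union> (Ann scale \<inter> homog Rg))"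
  assume "\<not> (\<exists>n>0. c ^ n \<in> ?J)"
  moreover have "gr_ideal Rg ?J" using E by (intro gr_ideal_span) auto
  ultimately obtain p where p: "gr_prime_ideal Rg p" "?J \<subseteq> p" "\<forall>n>0. c ^ n \<notin> p"
    using gr_prime_avoiding_powers by blast
  have "Ann scale \<subseteq> ?J"
    using span_homog_eq_gr_ideal[OF gr_ideal_Ann] R.span_mono[of "Ann scale \<inter> homog Rg"] by blast
  then have "gr_quasi_primary_ideal Rg p \<and> Ann scale \<subseteq> p"
    using p(1,2) gr_prime_imp_quasi_primary by blast
  then obtain Q where Q: "Q \<in> qpSpec scale Rg Mg" "colon scale Q = p"
    using surj unfolding psi_q_surjective_def by blast
  have p_ideal: "gr_ideal Rg p" using p(1) by (simp add: gr_prime_ideal_def)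
  then have "0 \<in> p" by (simp add: gr_ideal_def)
  then have "c \<notin> Gr Rg p" using Gr_homog_iff[OF grading c] p(3) by blast
  then have "Q \<in> qp_basic_open c" using Q by (simp add: qp_basic_open_def)
  then obtain e where "e \<in> E" "Q \<in> qp_basic_open e" using cover by blast
  moreover have "e \<in> Gr Rg p"
    using \<open>e \<in> E\<close> p(2) R.span_base[of e] subset_Gr[OF p_ideal] by blast
  ultimately show False using Q(2) by (simp add: qp_basic_open_def)
qed

lemma qp_basic_open_finite_subcover:
  assumes surj: "psi_q_surjective scale Rg Mg" and c: "c \<in> homog Rg" and E: "E \<subseteq> homog Rg"
    and cover: "qp_basic_open c \<subseteq> \<Union>(qp_basic_open ` E)"
  shows "\<exists>F\<subseteq>E. finite F \<and> qp_basic_open c \<subseteq> \<Union>(qp_basic_open ` F)"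
proof -
  obtain n where n: "n > 0" "c ^ n \<in> R.span (E \<union> (Ann scale \<inter> homog Rg))"
    using power_mem_span_if_basic_cover[OF assms] by blast
  then obtain F r where F: "finite F" "F \<subseteq> E \<union> (Ann scale \<inter> homog Rg)"
    and cn: "c ^ n = (\<Sum>e\<in>F. r e * e)"
    unfolding R.span_explicit by blast
  have cn_span: "c ^ n \<in> R.span F"
    unfolding cn by (intro R.span_sum) (auto intro: R.span_scale R.span_base)
  have "qp_basic_open c \<subseteq> \<Union>(qp_basic_open ` (F \<inter> E))"
  proof
    fix Q assume Q_c: "Q \<in> qp_basic_open c"
    then have Q: "Q \<in> qpSpec scale Rg Mg" by (simp add: qp_basic_open_def)
    show "Q \<in> \<Union>(qp_basic_open ` (F \<inter> E))"
    proof (rule ccontr)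
      assume Q_notin: "Q \<notin> \<Union>(qp_basic_open ` (F \<inter> E))"
      have "e \<in> Gr Rg (colon scale Q)" if "e \<in> F" for e
      proof (cases "e \<in> E")
        case True
        then show ?thesis using that Q Q_notin by (auto simp: qp_basic_open_def)
      next
        case False
        then have "qp_basic_open e = {}" using that F(2) qp_basic_open_Ann by blast
        then show ?thesis using Q by (auto simp: qp_basic_open_def)
      qed
      then have "c ^ n \<in> Gr Rg (colon scale Q)"
        using Gr_colon_if_mem_span[OF Q homog_power[OF c n(1)] _ _ cn_span] F(2) E by blast
      moreover have "0 \<in> colon scale Q"
        using gr_ideal_colon[OF qpSpecD(1)[OF Q]] by (simp add: gr_ideal_def)
      ultimately have "c \<in> Gr Rg (colon scale Q)" using Gr_of_power[OF c _ n(1)] by blast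
      then show False using Q_c by (simp add: qp_basic_open_def)
    qed
  qed
  then show ?thesis using F(1) by blast
qed

lemma qp_quasi_compact_open_basic_open:
  assumes surj: "psi_q_surjective scale Rg Mg" and c: "c \<in> homog Rg"
  shows "qp_quasi_compact_open scale Rg Mg (qp_basic_open c)"
  unfolding qp_quasi_compact_open_def
proof (intro conjI allI impI)
  show "qp_open scale Rg Mg (qp_basic_open c)" by (rule qp_open_basic_open[OF c])
  fix \<U> assume \<U>: "(\<forall>W\<in>\<U>. qp_open scale Rg Mg W) \<and> qp_basic_open c \<subseteq> \<Union>\<U>"
  define E where "E = {e \<in> homog Rg. \<exists>W\<in>\<U>. qp_basic_open e \<subseteq> W}"
  have E: "E \<subseteq> homog Rg" by (auto simp: E_def)
  have "qp_basic_open c \<subseteq> \<Union>(qp_basic_open ` E)"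
  proof
    fix Q assume "Q \<in> qp_basic_open c"
    then obtain W where W: "W \<in> \<U>" "Q \<in> W" using \<U> by blast
    then have "qp_open scale Rg Mg W" using \<U> by blast
    then obtain C where "C \<subseteq> homog Rg" "W = \<Union>(qp_basic_open ` C)"
      unfolding qp_open_iff_Union_basic_open by blast
    then show "Q \<in> \<Union>(qp_basic_open ` E)" using W unfolding E_def by blast
  qed
  then obtain F where F: "F \<subseteq> E" "finite F" "qp_basic_open c \<subseteq> \<Union>(qp_basic_open ` F)"
    using qp_basic_open_finite_subcover[OF surj c E] by blast
  have "\<forall>e\<in>F. \<exists>W. W \<in> \<U> \<and> qp_basic_open e \<subseteq> W" using F(1) by (auto simp: E_def)
  then obtain W where W: "\<And>e. e \<in> F \<Longrightarrow> W e \<in> \<U> \<and> qp_basic_open e \<subseteq> W e" by metis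
  have "W ` F \<subseteq> \<U>" using W by blast
  moreover have "finite (W ` F)" using F(2) by simp
  moreover have "qp_basic_open c \<subseteq> \<Union>(W ` F)" using F(3) W by blast
  ultimately show "\<exists>\<F>\<subseteq>\<U>. finite \<F> \<and> qp_basic_open c \<subseteq> \<Union>\<F>" by blast
qed

lemma qp_quasi_compact_open_imp_finite_Union_basic:
  assumes U: "qp_quasi_compact_open scale Rg Mg U"
  shows "\<exists>C. finite C \<and> C \<subseteq> homog Rg \<and> U = \<Union>(qp_basic_open ` C)"
proof -
  obtain C where C: "C \<subseteq> homog Rg" "U = \<Union>(qp_basic_open ` C)"
    using U qp_open_iff_Union_basic_open by (auto simp: qp_quasi_compact_open_def)
  have compact: "\<And>\<U>. \<forall>W\<in>\<U>. qp_open scale Rg Mg W \<Longrightarrow> U \<subseteq> \<Union>\<U> \<Longrightarrow>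
      \<exists>\<F>\<subseteq>\<U>. finite \<F> \<and> U \<subseteq> \<Union>\<F>"
    using U unfolding qp_quasi_compact_open_def by blast
  have "\<forall>W\<in>qp_basic_open ` C. qp_open scale Rg Mg W" using C(1) qp_open_basic_open by blast
  moreover have "U \<subseteq> \<Union>(qp_basic_open ` C)" using C(2) by simp
  ultimately have "\<exists>\<F>\<subseteq>qp_basic_open ` C. finite \<F> \<and> U \<subseteq> \<Union>\<F>" by (rule compact)
  then obtain \<F> where \<F>: "\<F> \<subseteq> qp_basic_open ` C" "finite \<F>" "U \<subseteq> \<Union>\<F>" by blast
  then obtain B where B: "B \<subseteq> C" "finite B" "\<F> = qp_basic_open ` B"
    by (meson finite_subset_image)
  then have "U = \<Union>(qp_basic_open ` B)" using \<F>(3) C(2) by blast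
  then show ?thesis using B C(1) by blast
qed

lemma Union_qp_basic_open_Int:
  assumes A: "A \<subseteq> homog Rg" and B: "B \<subseteq> homog Rg"
  shows "\<Union>(qp_basic_open ` A) \<inter> \<Union>(qp_basic_open ` B)
    = \<Union>(qp_basic_open ` (\<lambda>(a, b). a * b) ` (A \<times> B))"
proof -
  have "qp_basic_open ` (\<lambda>(a, b). a * b) ` (A \<times> B)
      = (\<lambda>(a, b). qp_basic_open a \<inter> qp_basic_open b) ` (A \<times> B)"
    unfolding image_image using qp_basic_open_mult A B by (intro image_cong) auto
  then show ?thesis by auto
qed

lemma qp_quasi_compact_open_Int:
  assumes surj: "psi_q_surjective scale Rg Mg"
    and U: "qp_quasi_compact_open scale Rg Mg U" and V: "qp_quasi_compact_open scale Rg Mg V"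
  shows "qp_quasi_compact_open scale Rg Mg (U \<inter> V)"
proof -
  obtain A B where A: "finite A" "A \<subseteq> homog Rg" "U = \<Union>(qp_basic_open ` A)"
    and B: "finite B" "B \<subseteq> homog Rg" "V = \<Union>(qp_basic_open ` B)"
    using qp_quasi_compact_open_imp_finite_Union_basic[OF U]
      qp_quasi_compact_open_imp_finite_Union_basic[OF V] by blast
  let ?C = "(\<lambda>(a, b). a * b) ` (A \<times> B)"
  have "finite ?C" and "?C \<subseteq> homog Rg" using A B homog_mult by auto
  then have "qp_quasi_compact_open scale Rg Mg (\<Union>(qp_basic_open ` ?C))"
    using qp_quasi_compact_open_basic_open[OF surj]
    by (intro qp_quasi_compact_open_Union qp_open_Union_basic_open) auto
  then show ?thesis using Union_qp_basic_open_Int[OF A(2) B(2)] A(3) B(3) by simp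
qed

lemma qp_open_eq_Union_quasi_compact:
  assumes surj: "psi_q_surjective scale Rg Mg" and "qp_open scale Rg Mg U"
  shows "\<exists>\<B>. (\<forall>W\<in>\<B>. qp_quasi_compact_open scale Rg Mg W) \<and> U = \<Union>\<B>"
proof -
  obtain C where C: "C \<subseteq> homog Rg" "U = \<Union>(qp_basic_open ` C)"
    using assms(2) unfolding qp_open_iff_Union_basic_open by blast
  have "\<forall>W\<in>qp_basic_open ` C. qp_quasi_compact_open scale Rg Mg W"
    using C(1) qp_quasi_compact_open_basic_open[OF surj] by blast
  with C(2) show ?thesis by blast
qed

end

theorem theorem3p17:
  fixes scale :: "'a::comm_ring_1 \<Rightarrow> 'b::ab_group_add \<Rightarrow> 'b"
    and Rg :: "'g::group_add \<Rightarrow> 'a set"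
    and Mg :: "'g \<Rightarrow> 'b set"
  assumes "graded_module scale Rg Mg"
    and "psi_q_surjective scale Rg Mg"
  shows "(\<forall>U V. qp_quasi_compact_open scale Rg Mg U \<and> qp_quasi_compact_open scale Rg Mg V
            \<longrightarrow> qp_quasi_compact_open scale Rg Mg (U \<inter> V))
       \<and> (\<forall>U. qp_open scale Rg Mg U \<longrightarrow>
            (\<exists>\<B>. (\<forall>W\<in>\<B>. qp_quasi_compact_open scale Rg Mg W) \<and> U = \<Union>\<B>))"
proof -
  interpret gr_module scale Rg Mg by (rule gr_module.intro) fact
  show ?thesis
    using qp_quasi_compact_open_Int[OF assms(2)] qp_open_eq_Union_quasi_compact[OF assms(2)] by blast
qed

end
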